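(* Let $(X_n)_{n\ge0}$ be the Kendall random walk with step distribution $\nu\in\mathcal P_s$, $\nu(\{0\})=0$, let $a\ge0$ and $\tau^{-}_{a,w}=\min\{n\ge1:X_n\le a\}$. Then $$\mathbb P(\tau^-_{a,w}=n)=\begin{cases}F(a),& n=1,\\ \big(1-F(a)\big)\,2^{-(n-1)},& n\ge2,\end{cases}$$ i.e. for $n\ge2$, $\mathbb P(\tau^-_{a,w}=n)=(1-F(a))\,\mathbb P(\tau_0^+=n-1)$ where $\tau_0^+=\min\{n\ge1:X_n>0\}$ is geometric with $\mathbb P(\tau_0^+=k)=2^{-k}$.
   Context: Fix $\alpha>0$. $\mathcal P_s$ is the set of symmetric Borel probability measures on $\mathbb R$. For $x\in\mathbb R$, $\widetilde\delta_x=\frac12(\delta_x+\delta_{-x})$. For a probability measure $\lambda=\mathcal L(X)$ and $c>0$, $T_c\lambda=\mathcal L(cX)$, and $T_0\lambda=\delta_0$. $\widetilde\pi_{2\alpha}$ is the symmetric Pareto probability measure with density $\alpha|y|^{-2\alpha-1}\mathbf 1_{\{|y|\ge1\}}$. The Kendall convolution $\vartriangle_\alpha$ on $\mathcal P_s$ is defined by $\widetilde\delta_x\vartriangle_\alpha\widetilde\delta_y=T_M\big(\varrho^\alpha\widetilde\pi_{2\alpha}+(1-\varrho^\alpha)\widetilde\delta_1\big)$ where $M=\max(|x|,|y|)$, $m=\min(|x|,|y|)$, $\varrho=m/M$ (and $\varrho=0$ if $M=0$), extended by $(\nu_1\vartriangle_\alpha\nu_2)(A)=\int\int(\widetilde\delta_x\vartriangle_\alpha\widetilde\delta_y)(A)\,\nu_1(dx)\nu_2(dy)$.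 For $x\in\mathbb R$ and $\mu\in\mathcal P_s$ we write $\delta_x\vartriangle_\alpha\mu:=\widetilde\delta_x\vartriangle_\alpha\mu$. $F(t)=\nu((-\infty,t])$. The Kendall random walk with step distribution $\nu$ is the Markov chain $(X_n)_{n\ge0}$ with $X_0=0$ and transition kernel $\mathbb P(X_{k+1}\in A\mid X_k=x)=(\delta_x\vartriangle_\alpha\nu)(A)$. *)

theory Defs
  imports "HOL-Probability.Probability"
begin

definition sym_pareto :: "real \<Rightarrow> real measure" where
  "sym_pareto \<alpha> = density lborel
     (\<lambda>y. ennreal (\<alpha> * \<bar>y\<bar> powr (-2*\<alpha> - 1) * indicator {z. \<bar>z\<bar> \<ge> 1} y))"

text \<open>(sym_delta x kendall sym_delta y)(A)
  = T_M(rho^alpha pi_{2 alpha} + (1 - rho^alpha) sym_delta 1)(A), with T_0 = delta_0.\<close>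
definition kendall_pt :: "real \<Rightarrow> real \<Rightarrow> real \<Rightarrow> real set \<Rightarrow> real" where
  "kendall_pt \<alpha> x y A =
     (let M = max \<bar>x\<bar> \<bar>y\<bar>; m = min \<bar>x\<bar> \<bar>y\<bar>;
          \<rho> = (if M = 0 then 0 else m / M)
      in if M = 0 then indicator A 0
         else \<rho> powr \<alpha> * measure (sym_pareto \<alpha>) {z. M * z \<in> A}
              + (1 - \<rho> powr \<alpha>) * ((indicator A M + indicator A (-M)) / 2))"

definition kendall_conv :: "real \<Rightarrow> real measure \<Rightarrow> real measure \<Rightarrow> real set \<Rightarrow> real" where
  "kendall_conv \<alpha> \<mu>1 \<mu>2 A = (\<integral>x. (\<integral>y. kendall_pt \<alpha> x y A \<partial>\<mu>2) \<partial>\<mu>1)"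

text \<open>Transition kernel (delta_x kendall nu)(A) := (sym_delta x kendall nu)(A);
  integration against sym_delta x = (delta_x + delta_{-x})/2 written out.\<close>
definition kendall_kernel :: "real \<Rightarrow> real measure \<Rightarrow> real \<Rightarrow> real set \<Rightarrow> real" where
  "kendall_kernel \<alpha> \<nu> x A =
     ((\<integral>y. kendall_pt \<alpha> x y A \<partial>\<nu>) + (\<integral>y. kendall_pt \<alpha> (-x) y A \<partial>\<nu>)) / 2"

definition markov_chain_from_0 ::
  "'a measure \<Rightarrow> (nat \<Rightarrow> 'a \<Rightarrow> real) \<Rightarrow> (real \<Rightarrow> real set \<Rightarrow> real) \<Rightarrow> bool" where
  "markov_chain_from_0 M X K \<longleftrightarrow>
     prob_space M \<and>
     (\<forall>k. X k \<in> borel_measurable M) \<and>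
     (\<forall>\<omega>\<in>space M. X 0 \<omega> = 0) \<and>
     (\<forall>n (A :: nat \<Rightarrow> real set) B. (\<forall>k. A k \<in> sets borel) \<longrightarrow> B \<in> sets borel \<longrightarrow>
        measure M {\<omega>\<in>space M. (\<forall>k\<le>n. X k \<omega> \<in> A k) \<and> X (Suc n) \<omega> \<in> B}
        = (\<integral>\<omega>. indicator {\<omega>\<in>space M. \<forall>k\<le>n. X k \<omega> \<in> A k} \<omega> * K (X n \<omega>) B \<partial>M))"

definition first_time :: "(real \<Rightarrow> bool) \<Rightarrow> (nat \<Rightarrow> 'a \<Rightarrow> real) \<Rightarrow> 'a \<Rightarrow> enat" where
  "first_time P X \<omega> =
     (if \<exists>n\<ge>1. P (X n \<omega>) then enat (LEAST n. n \<ge> 1 \<and> P (X n \<omega>)) else \<infinity>)"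

end

theory Submission
  imports Defs
begin

text \<open>
  A Kendall step from x with \<bar>x\<bar> > c \<ge> 0 lands, with M = max \<bar>x\<bar> \<bar>y\<bar> > c, either at
  \<plusminus>M (each with equal weight) or at M times a symmetric Pareto variable, whose modulus
  is at least 1. In both cases only the sign decides whether the new position is \<le> c, and
  each sign has probability 1/2. So from every such x the walk enters (-\<infinity>, c] and
  (c, \<infinity>) with probability exactly 1/2, whatever \<nu> and \<alpha> are. The first step from 0
  has law \<nu>; afterwards, while the walk stays above a (resp. at most 0), it exits with
  probability 1/2 at every step (at 0 itself by symmetry of \<nu> and \<nu>{0} = 0), so both
  first passage times are geometric.
\<close>

lemma nn_integral_pareto_tail:
  fixes \<alpha> :: real
  assumes "\<alpha> > 0"
  shows "(\<integral>\<^sup>+y. ennreal (\<alpha> * y powr (-2*\<alpha>-1)) * indicator {1..} y \<partial>lborel) = ennreal (1/2)"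
proof -
  have "(\<integral>\<^sup>+y. ennreal (\<alpha> * y powr (-2*\<alpha>-1)) * indicator {1..} y \<partial>lborel)
      = ennreal (0 - (- (1 powr (-2*\<alpha>)) / 2))"
  proof (rule nn_integral_FTC_atLeast)
    fix x :: real assume x: "1 \<le> x"
    show "0 \<le> \<alpha> * x powr (-2*\<alpha>-1)" using assms by simp
    have "((\<lambda>y. - (y powr (-2*\<alpha>)) / 2) has_real_derivative (- ((-2*\<alpha>) * x powr (-2*\<alpha> - 1)) / 2)) (at x)"
      using x by (auto intro!: derivative_eq_intros)
    then show "((\<lambda>y. - (y powr (-2*\<alpha>)) / 2) has_real_derivative \<alpha> * x powr (-2*\<alpha>-1)) (at x)"
      by simp
  next
    have lim: "((\<lambda>y. y powr (-2*\<alpha>)) \<longlongrightarrow> 0) at_top"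
      using assms by (intro tendsto_neg_powr filterlim_ident) auto
    show "((\<lambda>y. - (y powr (-2*\<alpha>)) / 2) \<longlongrightarrow> 0) at_top"
      using tendsto_divide[OF tendsto_minus[OF lim] tendsto_const[of 2]] by simp
  qed simp
  then show ?thesis by simp
qed

lemma emeasure_sym_pareto_cong:
  assumes "A \<in> sets borel" "B \<in> sets borel" "A \<inter> {z. \<bar>z\<bar> \<ge> 1} = B \<inter> {z. \<bar>z\<bar> \<ge> 1}"
  shows "emeasure (sym_pareto \<alpha>) A = emeasure (sym_pareto \<alpha>) B"
proof -
  define f where "f y = ennreal (\<alpha> * \<bar>y\<bar> powr (-2*\<alpha> - 1) * indicator {z. \<bar>z\<bar> \<ge> 1} y)"
    for y :: real
  have "f y * indicator A y = f y * indicator B y" for y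
    using assms(3) by (auto simp: f_def indicator_def)
  then show ?thesis
    using assms unfolding sym_pareto_def f_def[symmetric]
    by (simp add: emeasure_density f_def)
qed

lemma emeasure_sym_pareto_atLeast_1:
  assumes "\<alpha> > 0"
  shows "emeasure (sym_pareto \<alpha>) {1..} = ennreal (1/2)"
proof -
  have "ennreal (\<alpha> * \<bar>y\<bar> powr (-2*\<alpha> - 1) * indicator {z. \<bar>z\<bar> \<ge> 1} y) * indicator {1..} y
      = ennreal (\<alpha> * y powr (-2*\<alpha>-1)) * indicator {1..} y" for y :: real
    by (auto simp: indicator_def)
  then show ?thesis
    unfolding sym_pareto_def using nn_integral_pareto_tail[OF assms]
    by (simp add: emeasure_density del: ennreal_half)
qed

lemma emeasure_sym_pareto_atMost_neg1:
  assumes "\<alpha> > 0"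
  shows "emeasure (sym_pareto \<alpha>) {..-1} = ennreal (1/2)"
proof -
  define g where "g y = ennreal (\<alpha> * y powr (-2*\<alpha>-1)) * indicator {1..} y" for y :: real
  have "ennreal (\<alpha> * \<bar>y\<bar> powr (-2*\<alpha> - 1) * indicator {z. \<bar>z\<bar> \<ge> 1} y) * indicator {..-1} y
      = g (0 + (-1) * y)" for y :: real
    by (auto simp: indicator_def g_def)
  moreover have "(\<integral>\<^sup>+y. g y \<partial>lborel) = ennreal \<bar>-1\<bar> * (\<integral>\<^sup>+y. g (0 + (-1) * y) \<partial>lborel)"
    by (rule nn_integral_real_affine) (auto simp: g_def)
  ultimately show ?thesis
    unfolding sym_pareto_def using nn_integral_pareto_tail[OF assms]
    by (simp add: emeasure_density g_def del: ennreal_half)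
qed

lemma scaled_greaterThan_iff_on_pareto_support:
  fixes c M z :: real
  assumes "0 \<le> c" "c < M" "1 \<le> \<bar>z\<bar>"
  shows "c < M * z \<longleftrightarrow> 1 \<le> z"
proof (cases "1 \<le> z")
  case True
  with assms have "M * 1 \<le> M * z"
    by (intro mult_left_mono) auto
  then show ?thesis
    using True assms by linarith
next
  case False
  then have "M * z \<le> M * (-1)"
    using assms by (intro mult_left_mono) auto
  then show ?thesis
    using False assms by linarith
qed

lemma measure_sym_pareto_scaled_greaterThan:
  assumes "\<alpha> > 0" "0 \<le> c" "c < M"
  shows "measure (sym_pareto \<alpha>) {z. c < M * z} = 1/2"
proof -
  have "{z. c < M * z} \<inter> {z. \<bar>z\<bar> \<ge> 1} = {1..} \<inter> {z. \<bar>z\<bar> \<ge> 1}"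
    using scaled_greaterThan_iff_on_pareto_support[OF assms(2,3)] by auto
  then have "emeasure (sym_pareto \<alpha>) {z. c < M * z} = emeasure (sym_pareto \<alpha>) {1..}"
    by (intro emeasure_sym_pareto_cong) auto
  then show ?thesis
    using emeasure_sym_pareto_atLeast_1[OF assms(1)] by (simp add: measure_def del: ennreal_half)
qed

lemma measure_sym_pareto_scaled_atMost:
  assumes "\<alpha> > 0" "0 \<le> c" "c < M"
  shows "measure (sym_pareto \<alpha>) {z. M * z \<le> c} = 1/2"
proof -
  have "{z. M * z \<le> c} \<inter> {z. \<bar>z\<bar> \<ge> 1} = {..-1} \<inter> {z. \<bar>z\<bar> \<ge> 1}"
    using scaled_greaterThan_iff_on_pareto_support[OF assms(2,3)] by (force simp: not_less)
  then have "emeasure (sym_pareto \<alpha>) {z. M * z \<le> c} = emeasure (sym_pareto \<alpha>) {..-1}"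
    by (intro emeasure_sym_pareto_cong) auto
  then show ?thesis
    using emeasure_sym_pareto_atMost_neg1[OF assms(1)] by (simp add: measure_def del: ennreal_half)
qed

lemma kendall_pt_half_line:
  assumes "\<alpha> > 0" "0 \<le> c" "c < \<bar>x\<bar>" and B: "B = {..c} \<or> B = {c<..}"
  shows "kendall_pt \<alpha> x y B = 1/2"
proof -
  define M where "M = max \<bar>x\<bar> \<bar>y\<bar>"
  define \<rho> where "\<rho> = min \<bar>x\<bar> \<bar>y\<bar> / M"
  have M: "c < M" using assms(3) by (auto simp: M_def)
  have pareto: "measure (sym_pareto \<alpha>) {z. M * z \<in> B} = 1/2"
    using B measure_sym_pareto_scaled_greaterThan[OF assms(1,2) M]
      measure_sym_pareto_scaled_atMost[OF assms(1,2) M] by auto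
  have atom: "(indicator B M + indicator B (-M)) / 2 = (1/2 :: real)"
    using B M assms(2) by (auto simp: indicator_def)
  have "kendall_pt \<alpha> x y B = \<rho> powr \<alpha> * measure (sym_pareto \<alpha>) {z. M * z \<in> B}
      + (1 - \<rho> powr \<alpha>) * ((indicator B M + indicator B (-M)) / 2)"
    using M assms(2) unfolding kendall_pt_def Let_def M_def[symmetric] \<rho>_def by simp
  then show ?thesis
    unfolding pareto atom by (simp add: field_simps)
qed

lemma kendall_kernel_half_line:
  assumes "\<alpha> > 0" "0 \<le> c" "c < \<bar>x\<bar>" "B = {..c} \<or> B = {c<..}" "prob_space \<nu>"
  shows "kendall_kernel \<alpha> \<nu> x B = 1/2"
proof -
  interpret prob_space \<nu> by (fact assms(5))
  have "(\<lambda>y. kendall_pt \<alpha> x y B) = (\<lambda>_. 1/2)" "(\<lambda>y. kendall_pt \<alpha> (-x) y B) = (\<lambda>_. 1/2)"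
    using kendall_pt_half_line[OF assms(1,2) _ assms(4)] assms(3) by auto
  then show ?thesis
    unfolding kendall_kernel_def by (simp add: prob_space)
qed

lemma kendall_kernel_0:
  assumes "prob_space \<nu>" "sets \<nu> = sets borel"
    and sym: "\<forall>A\<in>sets borel. measure \<nu> (uminus ` A) = measure \<nu> A"
    and B: "B \<in> sets borel"
  shows "kendall_kernel \<alpha> \<nu> 0 B = measure \<nu> B"
proof -
  interpret prob_space \<nu> by (fact assms(1))
  have reflect: "uminus ` B = uminus -` B"
    by (auto simp: image_iff) (metis minus_minus)
  have "(uminus :: real \<Rightarrow> real) \<in> borel \<rightarrow>\<^sub>M borel"
    by measurable
  from measurable_sets[OF this B] have "uminus ` B \<in> sets borel"
    unfolding reflect by simp
  moreover have pt: "kendall_pt \<alpha> 0 y B = (indicator B y + indicator (uminus ` B) y) / 2" for y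
    unfolding reflect by (cases "y = 0") (auto simp: kendall_pt_def indicator_def abs_if)
  ultimately have "(\<integral>y. kendall_pt \<alpha> 0 y B \<partial>\<nu>) = (measure \<nu> B + measure \<nu> (uminus ` B)) / 2"
    unfolding pt using B assms(2)
    by (subst integral_divide_zero, subst Bochner_Integration.integral_add)
      (auto intro!: integrable_real_indicator simp: less_top[symmetric])
  then show ?thesis
    using sym B by (simp add: kendall_kernel_def)
qed

lemma measure_symmetric_half_lines:
  fixes \<nu> :: "real measure"
  assumes "prob_space \<nu>" "sets \<nu> = sets borel"
    and sym: "\<forall>A\<in>sets borel. measure \<nu> (uminus ` A) = measure \<nu> A"
    and "measure \<nu> {0} = 0"
  shows "measure \<nu> {0<..} = 1/2" "measure \<nu> {..0} = 1/2"
proof -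
  interpret prob_space \<nu> by (fact assms(1))
  have space: "space \<nu> = UNIV"
    using sets_eq_imp_space_eq[OF assms(2)] by simp
  have "measure \<nu> {..<0} = measure \<nu> {0<..}"
    using sym[rule_format, of "{0<..}"] by simp
  moreover have "measure \<nu> ({..<0} \<union> {0}) = measure \<nu> {..<0} + measure \<nu> {0}"
    by (rule finite_measure_Union) (auto simp: assms(2))
  then have "measure \<nu> {..0} = measure \<nu> {..<0} + measure \<nu> {0}"
    by (metis ivl_disj_un_singleton(2))
  moreover have "{0<..} = space \<nu> - {..(0::real)}"
    by (auto simp: space)
  then have "measure \<nu> {0<..} = 1 - measure \<nu> {..0}"
    using prob_compl[of "{..0}"] assms(2) by simp
  ultimately show "measure \<nu> {0<..} = 1/2" "measure \<nu> {..0} = 1/2"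
    using assms(4) by simp_all
qed

lemma first_time_eq_enat_iff:
  assumes "n \<ge> 1"
  shows "first_time P X \<omega> = enat n \<longleftrightarrow> (\<forall>k. 1 \<le> k \<and> k < n \<longrightarrow> \<not> P (X k \<omega>)) \<and> P (X n \<omega>)"
proof
  assume first: "first_time P X \<omega> = enat n"
  then have ex: "\<exists>n\<ge>1. P (X n \<omega>)" and least: "(LEAST n. n \<ge> 1 \<and> P (X n \<omega>)) = n"
    by (auto simp: first_time_def split: if_splits)
  show "(\<forall>k. 1 \<le> k \<and> k < n \<longrightarrow> \<not> P (X k \<omega>)) \<and> P (X n \<omega>)"
    using LeastI_ex[OF ex] not_less_Least[where P = "\<lambda>n. n \<ge> 1 \<and> P (X n \<omega>)"]
    unfolding least by auto
next
  assume "(\<forall>k. 1 \<le> k \<and> k < n \<longrightarrow> \<not> P (X k \<omega>)) \<and> P (X n \<omega>)"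
  moreover from this have "(LEAST n. n \<ge> 1 \<and> P (X n \<omega>)) = n"
    using assms by (intro Least_equality) (auto simp: not_less[symmetric])
  ultimately show "first_time P X \<omega> = enat n"
    using assms by (auto simp: first_time_def)
qed

lemma markov_chain_step_const:
  assumes mc: "markov_chain_from_0 M X K"
    and A: "\<forall>k. A k \<in> sets borel" and B: "B \<in> sets borel"
    and K: "\<And>x. x \<in> A n \<Longrightarrow> K x B = c"
  shows "measure M {\<omega>\<in>space M. (\<forall>k\<le>n. X k \<omega> \<in> A k) \<and> X (Suc n) \<omega> \<in> B}
       = measure M {\<omega>\<in>space M. \<forall>k\<le>n. X k \<omega> \<in> A k} * c"
proof -
  define E where "E = {\<omega>\<in>space M. \<forall>k\<le>n. X k \<omega> \<in> A k}"
  have [measurable]: "\<And>k. X k \<in> borel_measurable M"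
    and transition: "measure M {\<omega>\<in>space M. (\<forall>k\<le>n. X k \<omega> \<in> A k) \<and> X (Suc n) \<omega> \<in> B}
        = (\<integral>\<omega>. indicator E \<omega> * K (X n \<omega>) B \<partial>M)"
    using mc A B unfolding markov_chain_from_0_def E_def by auto
  interpret prob_space M
    using mc by (simp add: markov_chain_from_0_def)
  have "E = (\<Inter>k\<in>{..n}. X k -` A k \<inter> space M)"
    by (auto simp: E_def)
  then have "E \<in> sets M"
    using A by (auto intro!: sets.finite_INT measurable_sets)
  moreover have "(\<integral>\<omega>. indicator E \<omega> * K (X n \<omega>) B \<partial>M) = (\<integral>\<omega>. indicator E \<omega> * c \<partial>M)"
    using K by (intro Bochner_Integration.integral_cong) (auto simp: E_def indicator_def)
  ultimately show ?thesis
    unfolding transition E_def[symmetric] by simp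
qed

lemma markov_chain_first_time_1:
  assumes mc: "markov_chain_from_0 M X K" and P: "{x. P x} \<in> sets borel"
  shows "measure M {\<omega>\<in>space M. first_time P X \<omega> = enat 1} = K 0 {x. P x}"
proof -
  interpret prob_space M
    using mc by (simp add: markov_chain_from_0_def)
  have X0: "\<And>\<omega>. \<omega> \<in> space M \<Longrightarrow> X 0 \<omega> = 0"
    using mc by (simp add: markov_chain_from_0_def)
  have "measure M {\<omega>\<in>space M. (\<forall>k\<le>0. X k \<omega> \<in> {0}) \<and> X (Suc 0) \<omega> \<in> {x. P x}}
      = measure M {\<omega>\<in>space M. \<forall>k\<le>0. X k \<omega> \<in> {0}} * K 0 {x. P x}"
    using P by (intro markov_chain_step_const[OF mc]) auto
  moreover have "{\<omega>\<in>space M. \<forall>k\<le>0. X k \<omega> \<in> {0}} = space M"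
    using X0 by auto
  moreover have "{\<omega>\<in>space M. first_time P X \<omega> = enat 1}
      = {\<omega>\<in>space M. (\<forall>k\<le>0. X k \<omega> \<in> {0}) \<and> X (Suc 0) \<omega> \<in> {x. P x}}"
    using X0 by (auto simp: first_time_eq_enat_iff)
  ultimately show ?thesis
    by (simp add: prob_space)
qed

lemma markov_chain_first_time_Suc_Suc:
  assumes mc: "markov_chain_from_0 M X K" and P: "{x. P x} \<in> sets borel"
    and stay: "\<And>x. \<not> P x \<Longrightarrow> K x {x. \<not> P x} = q"
    and leave: "\<And>x. \<not> P x \<Longrightarrow> K x {x. P x} = r"
  shows "measure M {\<omega>\<in>space M. first_time P X \<omega> = enat (Suc (Suc m))} = K 0 {x. \<not> P x} * q ^ m * r"
proof -
  have X0: "\<And>\<omega>. \<omega> \<in> space M \<Longrightarrow> X 0 \<omega> = 0"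
    using mc by (simp add: markov_chain_from_0_def)
  define A where "A k = (if k = 0 then {0} else {x. \<not> P x})" for k :: nat
  define E where "E n = {\<omega>\<in>space M. \<forall>k\<le>n. X k \<omega> \<in> A k}" for n
  have not_P: "{x. \<not> P x} \<in> sets borel"
    using borel_comp[OF P] by (simp add: Collect_neg_eq)
  then have A_borel: "\<forall>k. A k \<in> sets borel"
    by (simp add: A_def)
  have E_Suc: "E (Suc n) = {\<omega>\<in>space M. (\<forall>k\<le>n. X k \<omega> \<in> A k) \<and> X (Suc n) \<omega> \<in> A (Suc n)}" for n
    by (auto simp: E_def le_Suc_eq)
  have E_0: "E 0 = space M"
    using X0 by (auto simp: E_def A_def)
  have step: "measure M (E (Suc n)) = measure M (E n) * (if n = 0 then K 0 {x. \<not> P x} else q)" for n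
    unfolding E_Suc unfolding E_def
    by (rule markov_chain_step_const[OF mc A_borel]) (auto simp: A_def stay not_P)
  have E_stay: "measure M (E (Suc n)) = K 0 {x. \<not> P x} * q ^ n" for n
  proof (induction n)
    case 0
    show ?case
      using step[of 0] E_0 mc by (simp add: markov_chain_from_0_def prob_space.prob_space)
  next
    case (Suc n)
    then show ?case
      using step[of "Suc n"] by simp
  qed
  have "{\<omega>\<in>space M. first_time P X \<omega> = enat (Suc (Suc m))}
      = {\<omega>\<in>space M. (\<forall>k\<le>Suc m. X k \<omega> \<in> A k) \<and> X (Suc (Suc m)) \<omega> \<in> {x. P x}}"
    using X0 by (auto simp: first_time_eq_enat_iff A_def less_Suc_eq_le)
  also have "measure M \<dots> = measure M (E (Suc m)) * r"
    unfolding E_def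
    by (rule markov_chain_step_const[OF mc A_borel P]) (auto simp: A_def leave)
  finally show ?thesis
    using E_stay by simp
qed

lemma kendall_walk_first_time_atMost:
  fixes \<nu> :: "real measure"
  assumes "\<alpha> > 0" "prob_space \<nu>" "sets \<nu> = sets borel"
    and sym: "\<forall>A\<in>sets borel. measure \<nu> (uminus ` A) = measure \<nu> A"
    and "a \<ge> 0" and mc: "markov_chain_from_0 M X (kendall_kernel \<alpha> \<nu>)"
  shows "measure M {\<omega>\<in>space M. first_time (\<lambda>x. x \<le> a) X \<omega> = enat 1} = measure \<nu> {..a}"
    and "measure M {\<omega>\<in>space M. first_time (\<lambda>x. x \<le> a) X \<omega> = enat (Suc (Suc m))}
       = (1 - measure \<nu> {..a}) / 2 ^ Suc m"
proof -
  interpret prob_space \<nu> by (fact assms(2))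
  have sets: "{x. x \<le> a} = {..a}" "{x. \<not> x \<le> a} = {a<..}"
    by auto
  have "{a<..} = space \<nu> - {..a}"
    using sets_eq_imp_space_eq[OF assms(3)] by auto
  then have above: "measure \<nu> {a<..} = 1 - measure \<nu> {..a}"
    using prob_compl[of "{..a}"] assms(3) by simp
  have half: "kendall_kernel \<alpha> \<nu> x B = 1/2" if "\<not> x \<le> a" "B = {..a} \<or> B = {a<..}" for x B
    using kendall_kernel_half_line[OF assms(1,5) _ that(2) assms(2)] that(1) assms(5) by simp
  show "measure M {\<omega>\<in>space M. first_time (\<lambda>x. x \<le> a) X \<omega> = enat 1} = measure \<nu> {..a}"
    using markov_chain_first_time_1[OF mc, of "\<lambda>x. x \<le> a"]
      kendall_kernel_0[OF assms(2,3) sym, of "{..a}"] by (simp add: sets)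
  show "measure M {\<omega>\<in>space M. first_time (\<lambda>x. x \<le> a) X \<omega> = enat (Suc (Suc m))}
      = (1 - measure \<nu> {..a}) / 2 ^ Suc m"
    using markov_chain_first_time_Suc_Suc[OF mc, of "\<lambda>x. x \<le> a" "1/2" "1/2"] half
      kendall_kernel_0[OF assms(2,3) sym, of "{a<..}"] above
    by (simp add: sets power_one_over)
qed

lemma kendall_walk_first_time_positive:
  fixes \<nu> :: "real measure"
  assumes "\<alpha> > 0" "prob_space \<nu>" "sets \<nu> = sets borel"
    and sym: "\<forall>A\<in>sets borel. measure \<nu> (uminus ` A) = measure \<nu> A"
    and "measure \<nu> {0} = 0" and mc: "markov_chain_from_0 M X (kendall_kernel \<alpha> \<nu>)"
  shows "measure M {\<omega>\<in>space M. first_time (\<lambda>x. x > 0) X \<omega> = enat (Suc k)} = 1 / 2 ^ Suc k"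
proof -
  have sets: "{x. 0 < x} = {0<..}" "{x. \<not> 0 < x} = {..0::real}"
    by auto
  have half: "kendall_kernel \<alpha> \<nu> x B = 1/2" if "x \<le> 0" "B = {..0} \<or> B = {0<..}" for x B
  proof (cases "x = 0")
    case True
    then show ?thesis
      using kendall_kernel_0[OF assms(2,3) sym, of B] measure_symmetric_half_lines[OF assms(2,3) sym assms(5)]
        that(2) by auto
  next
    case False
    then show ?thesis
      using kendall_kernel_half_line[OF assms(1) order_refl _ that(2) assms(2)] that(1) by simp
  qed
  show ?thesis
  proof (cases k)
    case 0
    then show ?thesis
      using markov_chain_first_time_1[OF mc, of "\<lambda>x. x > 0"] half[of 0] by (simp add: sets)
  next
    case (Suc m)
    then show ?thesis
      using markov_chain_first_time_Suc_Suc[OF mc, of "\<lambda>x. x > 0" "1/2" "1/2" m] half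
      by (simp add: sets power_one_over)
  qed
qed

theorem mainTheorem11:
  fixes \<alpha> a :: real and \<nu> :: "real measure"
    and M :: "'a measure" and X :: "nat \<Rightarrow> 'a \<Rightarrow> real"
  assumes "\<alpha> > 0"
    and "prob_space \<nu>" and "sets \<nu> = sets borel"
    and "\<forall>A\<in>sets borel. measure \<nu> (uminus ` A) = measure \<nu> A"
    and "measure \<nu> {0} = 0"
    and "a \<ge> 0"
    and "markov_chain_from_0 M X (kendall_kernel \<alpha> \<nu>)"
  shows "(\<forall>n\<ge>1. measure M {\<omega>\<in>space M. first_time (\<lambda>x. x \<le> a) X \<omega> = enat n}
            = (if n = 1 then measure \<nu> {..a}
               else (1 - measure \<nu> {..a}) / 2 ^ (n - 1)))
         \<and> (\<forall>k\<ge>1. measure M {\<omega>\<in>space M. first_time (\<lambda>x. x > 0) X \<omega> = enat k} = 1 / 2 ^ k)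
         \<and> (\<forall>n\<ge>2. measure M {\<omega>\<in>space M. first_time (\<lambda>x. x \<le> a) X \<omega> = enat n}
            = (1 - measure \<nu> {..a})
              * measure M {\<omega>\<in>space M. first_time (\<lambda>x. x > 0) X \<omega> = enat (n - 1)})"
proof -
  note first_time_atMost = kendall_walk_first_time_atMost[OF assms(1-4,6,7)]
  note first_time_positive = kendall_walk_first_time_positive[OF assms(1-5,7)]
  have below: "measure M {\<omega>\<in>space M. first_time (\<lambda>x. x \<le> a) X \<omega> = enat n}
      = (if n = 1 then measure \<nu> {..a} else (1 - measure \<nu> {..a}) / 2 ^ (n - 1))" if n: "n \<ge> 1" for n
  proof (cases "n = 1")
    case False
    then obtain m where "n = Suc (Suc m)"
      using n by (cases n; cases "n - 1") auto
    then show ?thesis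
      using first_time_atMost(2)[of m] by simp
  qed (use first_time_atMost(1) in simp)
  have above: "measure M {\<omega>\<in>space M. first_time (\<lambda>x. x > 0) X \<omega> = enat k} = 1 / 2 ^ k" if "k \<ge> 1" for k
    using first_time_positive[of "k - 1"] that by simp
  show ?thesis
  proof (intro conjI allI impI)
    fix n :: nat
    assume "n \<ge> 2"
    then show "measure M {\<omega>\<in>space M. first_time (\<lambda>x. x \<le> a) X \<omega> = enat n}
        = (1 - measure \<nu> {..a}) * measure M {\<omega>\<in>space M. first_time (\<lambda>x. x > 0) X \<omega> = enat (n - 1)}"
      using below[of n] above[of "n - 1"] by simp
  qed (simp_all add: below above)
qed

end
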